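(* Let $(G,\mathcal{B}_1,\mathcal{B}_2)$ be a Rota-Baxter system of groups with cocycle $\Phi$. For every $t\in G$, let $\Phi_t$ be the restriction of $\Phi$ to $G_t$. Then $\operatorname{Im}(\Phi_t)=\operatorname{Im}(\Phi)=G_{1_G}$ for every $t\in G$, and $\Phi_{1_G}:G_{1_G}\to G_{1_G}$ is a bijection.
   Context: A Rota-Baxter system of groups is a triple $(G,\mathcal{B}_1,\mathcal{B}_2)$ where $G$ is a group with identity $1_G$ and $\mathcal{B}_1,\mathcal{B}_2:G\to G$ are maps such that for all $a,b\in G$: $\mathcal{B}_1(a)\mathcal{B}_1(b)=\mathcal{B}_1(\mathcal{B}_1(a)b\mathcal{B}_2(a))$ and $\mathcal{B}_2(b)\mathcal{B}_2(a)=\mathcal{B}_2(\mathcal{B}_1(a)b\mathcal{B}_2(a))$. Descendent operation: $a\circ b=\mathcal{B}_1(a)b\mathcal{B}_2(a)$; cocycle: $\Phi(a)=\mathcal{B}_1(a)\mathcal{B}_2(a)$. For $t\in G$: $e_t=\mathcal{B}_1(t)^{-1}t\mathcal{B}_2(t)^{-1}$ and $G_t=\{a\in G\mid a\circ e_t=a\}$. *)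

theory Defs
  imports "HOL-Algebra.Group"
begin

definition RB_system :: "('a, 'b) monoid_scheme \<Rightarrow> ('a \<Rightarrow> 'a) \<Rightarrow> ('a \<Rightarrow> 'a) \<Rightarrow> bool" where
  "RB_system G B1 B2 \<longleftrightarrow> group G
     \<and> B1 \<in> carrier G \<rightarrow> carrier G \<and> B2 \<in> carrier G \<rightarrow> carrier G
     \<and> (\<forall>a\<in>carrier G. \<forall>b\<in>carrier G.
          B1 a \<otimes>\<^bsub>G\<^esub> B1 b = B1 (B1 a \<otimes>\<^bsub>G\<^esub> b \<otimes>\<^bsub>G\<^esub> B2 a)
        \<and> B2 b \<otimes>\<^bsub>G\<^esub> B2 a = B2 (B1 a \<otimes>\<^bsub>G\<^esub> b \<otimes>\<^bsub>G\<^esub> B2 a))"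

definition RB_desc :: "('a, 'b) monoid_scheme \<Rightarrow> ('a \<Rightarrow> 'a) \<Rightarrow> ('a \<Rightarrow> 'a) \<Rightarrow> 'a \<Rightarrow> 'a \<Rightarrow> 'a" where
  "RB_desc G B1 B2 a b = B1 a \<otimes>\<^bsub>G\<^esub> b \<otimes>\<^bsub>G\<^esub> B2 a"

definition RB_cocycle :: "('a, 'b) monoid_scheme \<Rightarrow> ('a \<Rightarrow> 'a) \<Rightarrow> ('a \<Rightarrow> 'a) \<Rightarrow> 'a \<Rightarrow> 'a" where
  "RB_cocycle G B1 B2 a = B1 a \<otimes>\<^bsub>G\<^esub> B2 a"

definition RB_e :: "('a, 'b) monoid_scheme \<Rightarrow> ('a \<Rightarrow> 'a) \<Rightarrow> ('a \<Rightarrow> 'a) \<Rightarrow> 'a \<Rightarrow> 'a" where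
  "RB_e G B1 B2 t = inv\<^bsub>G\<^esub> (B1 t) \<otimes>\<^bsub>G\<^esub> t \<otimes>\<^bsub>G\<^esub> inv\<^bsub>G\<^esub> (B2 t)"

definition RB_Gt :: "('a, 'b) monoid_scheme \<Rightarrow> ('a \<Rightarrow> 'a) \<Rightarrow> ('a \<Rightarrow> 'a) \<Rightarrow> 'a \<Rightarrow> 'a set" where
  "RB_Gt G B1 B2 t = {a \<in> carrier G. RB_desc G B1 B2 a (RB_e G B1 B2 t) = a}"

end

theory Submission
  imports Defs
begin

text \<open>The descendent operation \<open>a \<circ> b = B\<^sub>1(a) b B\<^sub>2(a)\<close> is associative, because the
axioms say exactly that \<open>B\<^sub>1(a \<circ> b) = B\<^sub>1(a) B\<^sub>1(b)\<close> and \<open>B\<^sub>2(a \<circ> b) = B\<^sub>2(b) B\<^sub>2(a)\<close>, and it has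
unique left division \<open>a \<setminus> c = B\<^sub>1(a)\<inverse> c B\<^sub>2(a)\<inverse>\<close>.  Since \<open>e\<^sub>t = t \<setminus> t\<close>, one gets
\<open>B\<^sub>1(e\<^sub>t) = B\<^sub>2(e\<^sub>t) = 1\<close>, so every \<open>e\<^sub>t\<close> is a left unit for \<open>\<circ>\<close>.  Now \<open>\<Phi>(a) = a \<circ> 1\<close>, hence
\<open>\<Phi>(a) \<circ> e\<^sub>1 = a \<circ> (1 \<circ> e\<^sub>1) = \<Phi>(a)\<close> shows \<open>Im \<Phi> \<subseteq> G\<^sub>1\<close>, and \<open>\<Phi>(a \<circ> e\<^sub>t) = a \<circ> e\<^sub>t \<circ> 1 = \<Phi>(a)\<close>
with \<open>a \<circ> e\<^sub>t \<in> G\<^sub>t\<close> shows \<open>\<Phi>(G\<^sub>t) = Im \<Phi>\<close>.  Finally \<open>y = 1 \<setminus> e\<^sub>1\<close> satisfies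
\<open>1 \<circ> y = y \<circ> 1 = e\<^sub>1\<close>, so on \<open>G\<^sub>1\<close> the map \<open>a \<mapsto> a \<circ> y\<close> is a two-sided inverse of \<open>\<Phi>\<close>.\<close>

locale rota_baxter_system = group G for G :: "('a, 'b) monoid_scheme" (structure) +
  fixes B1 B2 :: "'a \<Rightarrow> 'a"
  assumes B1_closed [simp]: "a \<in> carrier G \<Longrightarrow> B1 a \<in> carrier G"
    and B2_closed [simp]: "a \<in> carrier G \<Longrightarrow> B2 a \<in> carrier G"
    and B1_mult: "\<lbrakk>a \<in> carrier G; b \<in> carrier G\<rbrakk> \<Longrightarrow> B1 a \<otimes> B1 b = B1 (B1 a \<otimes> b \<otimes> B2 a)"
    and B2_mult: "\<lbrakk>a \<in> carrier G; b \<in> carrier G\<rbrakk> \<Longrightarrow> B2 b \<otimes> B2 a = B2 (B1 a \<otimes> b \<otimes> B2 a)"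

lemma rota_baxter_systemI: "RB_system G B1 B2 \<Longrightarrow> rota_baxter_system G B1 B2"
  unfolding RB_system_def rota_baxter_system_def rota_baxter_system_axioms_def
  by (auto simp: Pi_def)

context rota_baxter_system
begin

abbreviation desc where "desc \<equiv> RB_desc G B1 B2"
abbreviation cocycle where "cocycle \<equiv> RB_cocycle G B1 B2"
abbreviation e where "e \<equiv> RB_e G B1 B2"
abbreviation Gt where "Gt \<equiv> RB_Gt G B1 B2"

definition desc_ldiv :: "'a \<Rightarrow> 'a \<Rightarrow> 'a" where
  "desc_ldiv a c = inv (B1 a) \<otimes> c \<otimes> inv (B2 a)"

lemma desc_closed [simp]: "\<lbrakk>a \<in> carrier G; b \<in> carrier G\<rbrakk> \<Longrightarrow> desc a b \<in> carrier G"
  by (simp add: RB_desc_def)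

lemma desc_ldiv_closed [simp]: "\<lbrakk>a \<in> carrier G; c \<in> carrier G\<rbrakk> \<Longrightarrow> desc_ldiv a c \<in> carrier G"
  by (simp add: desc_ldiv_def)

lemma cocycle_closed [simp]: "a \<in> carrier G \<Longrightarrow> cocycle a \<in> carrier G"
  by (simp add: RB_cocycle_def)

lemma e_eq_desc_ldiv: "e t = desc_ldiv t t"
  by (simp add: RB_e_def desc_ldiv_def)

lemma B1_desc: "\<lbrakk>a \<in> carrier G; b \<in> carrier G\<rbrakk> \<Longrightarrow> B1 (desc a b) = B1 a \<otimes> B1 b"
  by (simp add: RB_desc_def B1_mult)

lemma B2_desc: "\<lbrakk>a \<in> carrier G; b \<in> carrier G\<rbrakk> \<Longrightarrow> B2 (desc a b) = B2 b \<otimes> B2 a"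
  by (simp add: RB_desc_def B2_mult)

lemma desc_assoc:
  assumes "a \<in> carrier G" "b \<in> carrier G" "c \<in> carrier G"
  shows "desc (desc a b) c = desc a (desc b c)"
proof -
  have "desc (desc a b) c = B1 (desc a b) \<otimes> c \<otimes> B2 (desc a b)"
    by (rule RB_desc_def)
  also have "\<dots> = B1 a \<otimes> B1 b \<otimes> c \<otimes> (B2 b \<otimes> B2 a)"
    using assms by (simp add: B1_desc B2_desc)
  also have "\<dots> = desc a (desc b c)"
    using assms by (simp add: RB_desc_def m_assoc)
  finally show ?thesis .
qed

lemma desc_desc_ldiv: "\<lbrakk>a \<in> carrier G; c \<in> carrier G\<rbrakk> \<Longrightarrow> desc a (desc_ldiv a c) = c"
  by (simp add: RB_desc_def desc_ldiv_def m_assoc flip: m_assoc[of "B1 a"])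

lemma B1_desc_ldiv:
  assumes "a \<in> carrier G" "c \<in> carrier G"
  shows "B1 (desc_ldiv a c) = inv (B1 a) \<otimes> B1 c"
proof -
  have "B1 a \<otimes> B1 (desc_ldiv a c) = B1 c"
    using B1_desc[of a "desc_ldiv a c"] assms by (simp add: desc_desc_ldiv)
  then show ?thesis
    using assms by (metis B1_closed desc_ldiv_closed inv_solve_left)
qed

lemma B2_desc_ldiv:
  assumes "a \<in> carrier G" "c \<in> carrier G"
  shows "B2 (desc_ldiv a c) = B2 c \<otimes> inv (B2 a)"
proof -
  have "B2 (desc_ldiv a c) \<otimes> B2 a = B2 c"
    using B2_desc[of a "desc_ldiv a c"] assms by (simp add: desc_desc_ldiv)
  then show ?thesis
    using assms by (metis B2_closed desc_ldiv_closed inv_solve_right)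
qed

lemma e_closed [simp]: "t \<in> carrier G \<Longrightarrow> e t \<in> carrier G"
  by (simp add: e_eq_desc_ldiv)

lemma B1_e [simp]: "t \<in> carrier G \<Longrightarrow> B1 (e t) = \<one>"
  by (simp add: e_eq_desc_ldiv B1_desc_ldiv)

lemma B2_e [simp]: "t \<in> carrier G \<Longrightarrow> B2 (e t) = \<one>"
  by (simp add: e_eq_desc_ldiv B2_desc_ldiv)

lemma desc_e_left: "\<lbrakk>t \<in> carrier G; x \<in> carrier G\<rbrakk> \<Longrightarrow> desc (e t) x = x"
  by (simp add: RB_desc_def)

lemma cocycle_eq_desc_one: "a \<in> carrier G \<Longrightarrow> cocycle a = desc a \<one>"
  by (simp add: RB_desc_def RB_cocycle_def)

lemma desc_one_e_one: "desc \<one> (e \<one>) = \<one>"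
  using desc_desc_ldiv[of \<one> \<one>] by (simp add: e_eq_desc_ldiv)

lemma desc_one_ldiv_e_one: "desc \<one> (desc_ldiv \<one> (e \<one>)) = e \<one>"
  by (simp add: desc_desc_ldiv)

lemma desc_ldiv_e_one_one: "desc (desc_ldiv \<one> (e \<one>)) \<one> = e \<one>"
  by (simp add: RB_desc_def B1_desc_ldiv B2_desc_ldiv) (simp add: RB_e_def)

lemma desc_e_mem_Gt: "\<lbrakk>t \<in> carrier G; a \<in> carrier G\<rbrakk> \<Longrightarrow> desc a (e t) \<in> Gt t"
  by (simp add: RB_Gt_def desc_assoc desc_e_left)

lemma cocycle_desc_e: "\<lbrakk>t \<in> carrier G; a \<in> carrier G\<rbrakk> \<Longrightarrow> cocycle (desc a (e t)) = cocycle a"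
  by (simp add: cocycle_eq_desc_one desc_assoc desc_e_left)

lemma cocycle_mem_Gt_one: "a \<in> carrier G \<Longrightarrow> cocycle a \<in> Gt \<one>"
  by (simp add: RB_Gt_def cocycle_eq_desc_one desc_assoc desc_one_e_one)

lemma cocycle_desc_ldiv_e_one: "a \<in> Gt \<one> \<Longrightarrow> cocycle (desc a (desc_ldiv \<one> (e \<one>))) = a"
  by (simp add: RB_Gt_def cocycle_eq_desc_one desc_assoc desc_ldiv_e_one_one)

lemma desc_cocycle_ldiv_e_one: "a \<in> Gt \<one> \<Longrightarrow> desc (cocycle a) (desc_ldiv \<one> (e \<one>)) = a"
  by (simp add: RB_Gt_def cocycle_eq_desc_one desc_assoc desc_one_ldiv_e_one)

lemma image_cocycle_Gt:
  assumes "t \<in> carrier G"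
  shows "cocycle ` Gt t = cocycle ` carrier G"
proof (intro equalityI subsetI)
  fix z assume "z \<in> cocycle ` carrier G"
  then obtain a where "a \<in> carrier G" "z = cocycle a" by blast
  with assms show "z \<in> cocycle ` Gt t"
    using cocycle_desc_e desc_e_mem_Gt by (metis image_eqI)
qed (auto simp: RB_Gt_def)

lemma image_cocycle: "cocycle ` carrier G = Gt \<one>"
proof (intro equalityI subsetI)
  fix a assume a: "a \<in> Gt \<one>"
  then have "desc a (desc_ldiv \<one> (e \<one>)) \<in> carrier G"
    by (simp add: RB_Gt_def)
  with a show "a \<in> cocycle ` carrier G"
    using cocycle_desc_ldiv_e_one by (metis image_eqI)
qed (auto simp: cocycle_mem_Gt_one)

lemma inj_on_cocycle_Gt_one: "inj_on cocycle (Gt \<one>)"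
  by (metis inj_onI desc_cocycle_ldiv_e_one)

end

theorem proposition4p4:
  fixes G :: "('a, 'b) monoid_scheme" and B1 B2 :: "'a \<Rightarrow> 'a"
  assumes "RB_system G B1 B2"
  shows "(\<forall>t\<in>carrier G.
            RB_cocycle G B1 B2 ` RB_Gt G B1 B2 t = RB_cocycle G B1 B2 ` carrier G
          \<and> RB_cocycle G B1 B2 ` carrier G = RB_Gt G B1 B2 \<one>\<^bsub>G\<^esub>)
       \<and> bij_betw (RB_cocycle G B1 B2) (RB_Gt G B1 B2 \<one>\<^bsub>G\<^esub>) (RB_Gt G B1 B2 \<one>\<^bsub>G\<^esub>)"
proof -
  interpret rota_baxter_system G B1 B2
    using assms by (rule rota_baxter_systemI)
  have "cocycle ` Gt \<one>\<^bsub>G\<^esub> = Gt \<one>\<^bsub>G\<^esub>"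
    using image_cocycle_Gt[of "\<one>\<^bsub>G\<^esub>"] image_cocycle by simp
  then show ?thesis
    using image_cocycle_Gt image_cocycle inj_on_cocycle_Gt_one by (simp add: bij_betw_def)
qed

end
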